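(* Let $E$ be a Banach $f$-algebra and let $(x_n)$ be a sequence in $E$ which is disjoint ($|x_n|\wedge|x_m|=0$ for $n\neq m$) and decreasing. Then $x_n\xrightarrow{mw}0$.
   Context: All vector lattices are real and Archimedean. An $f$-algebra is a vector lattice with an associative multiplication making it an algebra, such that products of positive elements are positive and $x\wedge y=0$ implies $(xz)\wedge y=(zx)\wedge y=0$ for all $z\ge0$. A Banach $f$-algebra is an $f$-algebra which is a Banach lattice with $\|xy\|\le\|x\|\|y\|$. A net $(x_\alpha)$ in $E$ $mw$-converges to $x$ ($x_\alpha\xrightarrow{mw}x$) if $|x_\alpha-x|u\to0$ weakly for every $u\in E_+$. *)

theory Defs
  imports "HOL-Analysis.Analysis"
begin

definition lat_abs :: "'a::{lattice, ab_group_add} \<Rightarrow> 'a" where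
  "lat_abs x = sup x (- x)"

definition archimedean_vl :: "'a::{ordered_real_vector, lattice} itself \<Rightarrow> bool" where
  "archimedean_vl _ \<longleftrightarrow>
     (\<forall>x y::'a. 0 \<le> x \<longrightarrow> 0 \<le> y \<longrightarrow> (\<forall>n::nat. real n *\<^sub>R x \<le> y) \<longrightarrow> x = 0)"

definition banach_lattice_norm :: "'a::{ordered_real_vector, lattice, real_normed_vector} itself \<Rightarrow> bool" where
  "banach_lattice_norm _ \<longleftrightarrow>
     (\<forall>x y::'a. lat_abs x \<le> lat_abs y \<longrightarrow> norm x \<le> norm y)"

definition f_algebra_axioms :: "'a::{ordered_real_vector, lattice, real_algebra} itself \<Rightarrow> bool" where
  "f_algebra_axioms _ \<longleftrightarrow>
     (\<forall>x y::'a. 0 \<le> x \<longrightarrow> 0 \<le> y \<longrightarrow> 0 \<le> x * y) \<and>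
     (\<forall>x y z::'a. inf x y = 0 \<longrightarrow> 0 \<le> z \<longrightarrow> inf (x * z) y = 0 \<and> inf (z * x) y = 0)"

definition banach_f_algebra :: "'a::{banach, real_normed_algebra, ordered_real_vector, lattice} itself \<Rightarrow> bool" where
  "banach_f_algebra T \<longleftrightarrow> archimedean_vl T \<and> banach_lattice_norm T \<and> f_algebra_axioms T"

definition weakly_tendsto :: "(nat \<Rightarrow> 'a::real_normed_vector) \<Rightarrow> 'a \<Rightarrow> bool" where
  "weakly_tendsto X x \<longleftrightarrow>
     (\<forall>f::'a \<Rightarrow> real. bounded_linear f \<longrightarrow> (\<lambda>n. f (X n)) \<longlonglongrightarrow> f x)"

definition mw_tendsto :: "(nat \<Rightarrow> 'a::{real_normed_algebra, ordered_real_vector, lattice}) \<Rightarrow> 'a \<Rightarrow> bool" where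
  "mw_tendsto X x \<longleftrightarrow> (\<forall>u::'a. 0 \<le> u \<longrightarrow> weakly_tendsto (\<lambda>n. lat_abs (X n - x) * u) 0)"

end

theory Submission
  imports Defs
begin

text \<open>A decreasing sequence of pairwise disjoint elements is already zero from the second term
on: if \<open>y \<le> x\<close> and \<open>|x| \<and> |y| = 0\<close>, then \<open>x\<^sup>- \<le> y\<^sup>- \<le> |y|\<close> and \<open>x\<^sup>- \<le> |x|\<close> force \<open>x\<^sup>- = 0\<close>, and
symmetrically \<open>y\<^sup>+ = 0\<close>. So every \<open>x\<^sub>n\<close> with \<open>n \<ge> 1\<close> is both \<open>\<ge> 0\<close> (compared with \<open>x\<^sub>n\<^sub>+\<^sub>1\<close>)
and \<open>\<le> 0\<close> (compared with \<open>x\<^sub>n\<^sub>-\<^sub>1\<close>), and mw-convergence holds trivially. In particular neither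
the norm nor the multiplication plays any role.\<close>

lemma lat_abs_nonneg:
  fixes x :: "'a::{ordered_real_vector, lattice}"
  shows "0 \<le> lat_abs x"
proof -
  let ?s = "sup x (- x)"
  have "x + - x \<le> ?s + ?s" by (intro add_mono sup_ge1 sup_ge2)
  hence "0 \<le> (1/2::real) *\<^sub>R (?s + ?s)" by (intro scaleR_nonneg_nonneg) simp_all
  also have "(1/2::real) *\<^sub>R (?s + ?s) = ?s"
    by (simp only: scaleR_right_distrib flip: scaleR_add_left) simp
  finally show ?thesis by (simp only: lat_abs_def)
qed

lemma lat_abs_zero [simp]: "lat_abs (0::'a::{lattice, ab_group_add}) = 0"
  by (simp add: lat_abs_def)

lemma pos_part_le_lat_abs:
  fixes x :: "'a::{ordered_real_vector, lattice}"
  shows "sup x 0 \<le> lat_abs x"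
  using lat_abs_nonneg[of x] by (simp add: lat_abs_def)

lemma neg_part_le_lat_abs:
  fixes x :: "'a::{ordered_real_vector, lattice}"
  shows "sup (- x) 0 \<le> lat_abs x"
  using lat_abs_nonneg[of x] by (simp add: lat_abs_def)

lemma disjoint_le_imp_nonneg:
  fixes x y :: "'a::{ordered_real_vector, lattice}"
  assumes "y \<le> x" and "inf (lat_abs x) (lat_abs y) = 0"
  shows "0 \<le> x"
proof -
  have "sup (- x) 0 \<le> sup (- y) 0" using assms(1) by (intro sup_mono) simp_all
  also have "\<dots> \<le> lat_abs y" by (rule neg_part_le_lat_abs)
  finally have "sup (- x) 0 \<le> inf (lat_abs x) (lat_abs y)"
    using neg_part_le_lat_abs by (rule le_infI[rotated])
  thus ?thesis using assms(2) by simp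
qed

lemma disjoint_le_imp_nonpos:
  fixes x y :: "'a::{ordered_real_vector, lattice}"
  assumes "y \<le> x" and "inf (lat_abs x) (lat_abs y) = 0"
  shows "y \<le> 0"
proof -
  have "sup y 0 \<le> sup x 0" using assms(1) by (intro sup_mono) simp_all
  also have "\<dots> \<le> lat_abs x" by (rule pos_part_le_lat_abs)
  finally have "sup y 0 \<le> inf (lat_abs x) (lat_abs y)"
    using pos_part_le_lat_abs by (rule le_infI)
  thus ?thesis using assms(2) by simp
qed

lemma decreasing_disjoint_eq_zero:
  fixes x :: "nat \<Rightarrow> 'a::{ordered_real_vector, lattice}"
  assumes disjoint: "\<And>n m. n \<noteq> m \<Longrightarrow> inf (lat_abs (x n)) (lat_abs (x m)) = 0"
    and decreasing: "\<And>n. x (Suc n) \<le> x n"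
    and "n \<ge> 1"
  shows "x n = 0"
proof -
  obtain k where n: "n = Suc k" using \<open>n \<ge> 1\<close> by (cases n) auto
  have "0 \<le> x n" by (rule disjoint_le_imp_nonneg[OF decreasing disjoint]) simp
  moreover have "x n \<le> 0"
    unfolding n by (rule disjoint_le_imp_nonpos[OF decreasing disjoint]) simp
  ultimately show ?thesis by (rule order_antisym[rotated])
qed

lemma mw_tendsto_eventually_zero:
  fixes x :: "nat \<Rightarrow> 'a::{real_normed_algebra, ordered_real_vector, lattice}"
  assumes "eventually (\<lambda>n. x n = 0) sequentially"
  shows "mw_tendsto x 0"
  unfolding mw_tendsto_def weakly_tendsto_def
proof (intro allI impI)
  fix u :: 'a and f :: "'a \<Rightarrow> real"
  have "eventually (\<lambda>n. f (lat_abs (x n - 0) * u) = f 0) sequentially"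
    using assms by eventually_elim simp
  thus "(\<lambda>n. f (lat_abs (x n - 0) * u)) \<longlonglongrightarrow> f 0" by (rule tendsto_eventually)
qed

theorem lemma2p3:
  fixes x :: "nat \<Rightarrow> 'a::{banach, real_normed_algebra, ordered_real_vector, lattice}"
  assumes "banach_f_algebra TYPE('a)"
    and "\<And>n m. n \<noteq> m \<Longrightarrow> inf (lat_abs (x n)) (lat_abs (x m)) = 0"
    and "\<And>n. x (Suc n) \<le> x n"
  shows "mw_tendsto x 0"
proof (rule mw_tendsto_eventually_zero)
  show "eventually (\<lambda>n. x n = 0) sequentially"
    using eventually_ge_at_top[of 1]
    by eventually_elim (use assms(2,3) in \<open>rule decreasing_disjoint_eq_zero\<close>)
qed

end
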